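(* Let $0\le\alpha\le\beta$ be fixed. Let $(q_n)_{n\ge1}$ and $(p_n)_{n\ge1}$ be sequences with $q_n\in(0,1)$ and $p_n\in(q_n,1]$ for all $n$, such that $\lim_{n\to\infty}p_n=1$, $\lim_{n\to\infty}q_n=1$, $\lim_{n\to\infty}p_n^n=1$ and $\lim_{n\to\infty}q_n^n=1$. Then for every $f\in C[0,1]$, $S_{n,p_n,q_n}(f;x)$ converges to $f(x)$ uniformly on $[0,1]$ as $n\to\infty$, i.e. $\lim_{n\to\infty}\sup_{x\in[0,1]}|S_{n,p_n,q_n}(f;x)-f(x)|=0$.
   Context: For $p>0$, $q>0$ and integers $m\ge 0$, the $(p,q)$-integer is $[m]_{p,q}=p^{m-1}+p^{m-2}q+\cdots+pq^{m-2}+q^{m-1}$ (so $[m]_{p,q}=\frac{p^m-q^m}{p-q}$ when $p\ne q$, and $[0]_{p,q}=0$). The $(p,q)$-factorial is $[m]_{p,q}!=[1]_{p,q}[2]_{p,q}\cdots[m]_{p,q}$ with $[0]_{p,q}!=1$, and the $(p,q)$-binomial coefficient is $\left[\begin{smallmatrix} n\\ k\end{smallmatrix}\right]_{p,q}=\frac{[n]_{p,q}!}{[k]_{p,q}!\,[n-k]_{p,q}!}$ for $0\le k\le n$. For $f\in C[0,1]$, real parameters $0\le\alpha\le\beta$, and $x\in[0,1]$, the $(p,q)$-Bernstein–Stancu operator is $$S_{n,p,q}(f;x)=\frac{1}{p^{n(n-1)/2}}\sum_{k=0}^{n}\left[\begin{smallmatrix} n\\ k\end{smallmatrix}\right]_{p,q}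 p^{k(k-1)/2}\,x^{k}\prod_{s=0}^{n-k-1}(p^{s}-q^{s}x)\; f\!\left(\frac{p^{n-k}[k]_{p,q}+\alpha}{[n]_{p,q}+\beta}\right),$$ where an empty product (when $k=n$) equals $1$. *)

theory Defs
  imports "HOL-Analysis.Analysis"
begin

definition pq_int :: "nat \<Rightarrow> real \<Rightarrow> real \<Rightarrow> real" where
  "pq_int m p q = (\<Sum>j<m. p ^ (m - 1 - j) * q ^ j)"

definition pq_fact :: "nat \<Rightarrow> real \<Rightarrow> real \<Rightarrow> real" where
  "pq_fact m p q = (\<Prod>i=1..m. pq_int i p q)"

definition pq_binom :: "nat \<Rightarrow> nat \<Rightarrow> real \<Rightarrow> real \<Rightarrow> real" where
  "pq_binom n k p q = pq_fact n p q / (pq_fact k p q * pq_fact (n - k) p q)"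

definition pq_bernstein_stancu ::
  "real \<Rightarrow> real \<Rightarrow> nat \<Rightarrow> real \<Rightarrow> real \<Rightarrow> (real \<Rightarrow> real) \<Rightarrow> real \<Rightarrow> real" where
  "pq_bernstein_stancu \<alpha> \<beta> n p q f x =
     (1 / p ^ (n * (n - 1) div 2)) *
     (\<Sum>k=0..n. pq_binom n k p q * p ^ (k * (k - 1) div 2) * x ^ k *
        (\<Prod>s=0..<n-k. p ^ s - q ^ s * x) *
        f ((p ^ (n - k) * pq_int k p q + \<alpha>) / (pq_int n p q + \<beta>)))"

end

theory Submission
  imports Defs
begin

text \<open>The operator is a convex combination: \<open>S f x = \<Sum>k b\<^sub>k(x) f(t\<^sub>k)\<close> with weights
  \<open>b\<^sub>k \<ge> 0\<close> summing to one (the \<open>(p,q)\<close>-Bernstein basis sums to \<open>p^(n choose 2)\<close>) and nodes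
  \<open>t\<^sub>k \<in> [0,1]\<close>. A \<open>(p,q)\<close>-analogue of the absorption identity for binomial coefficients
  gives the first two moments and hence
  \<open>\<Sum>k b\<^sub>k (t\<^sub>k - x)\<^sup>2 = ((\<alpha> - \<beta>x)\<^sup>2 + [n] p^(n-1) x(1-x)) / ([n] + \<beta>)\<^sup>2 \<le> \<beta>\<^sup>2/[n]\<^sup>2 + 1/[n]\<close>,
  which tends to \<open>0\<close> uniformly because \<open>[n] \<ge> n q\<^sub>n^n \<rightarrow> \<infinity>\<close>. Finally, a continuous \<open>f\<close> on
  \<open>[0,1]\<close> satisfies \<open>|f s - f x| \<le> \<epsilon> + K\<^sub>\<epsilon> (s - x)\<^sup>2\<close>, and this estimate passes through
  the convex combination.\<close>

lemma pq_int_mult_diff: "pq_int m p q * (p - q) = p ^ m - q ^ m"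
proof -
  have "q ^ m - p ^ m = (q - p) * (\<Sum>i<m. p ^ (m - Suc i) * q ^ i)" by (rule power_diff_sumr2)
  moreover have "pq_int m p q = (\<Sum>i<m. p ^ (m - Suc i) * q ^ i)" unfolding pq_int_def by simp
  ultimately show ?thesis by (simp add: algebra_simps)
qed

lemma pq_int_0 [simp]: "pq_int 0 p q = 0"
  by (simp add: pq_int_def)

lemma pq_int_add:
  assumes "p \<noteq> q"
  shows "pq_int (a + b) p q = p ^ b * pq_int a p q + q ^ a * pq_int b p q"
proof -
  have "(pq_int (a + b) p q - (p ^ b * pq_int a p q + q ^ a * pq_int b p q)) * (p - q)
      = pq_int (a + b) p q * (p - q) - p ^ b * (pq_int a p q * (p - q)) - q ^ a * (pq_int b p q * (p - q))"
    by (simp add: algebra_simps)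
  also have "\<dots> = 0"
    unfolding pq_int_mult_diff by (simp add: algebra_simps power_add)
  finally show ?thesis using assms by simp
qed

lemma pq_int_Suc_0 [simp]: "pq_int (Suc 0) p q = 1"
  by (simp add: pq_int_def)

lemma pq_int_Suc: "p \<noteq> q \<Longrightarrow> pq_int (Suc m) p q = p ^ m + q * pq_int m p q"
  using pq_int_add[of p q 1 m] by simp

lemma pq_int_nonneg: "0 \<le> q \<Longrightarrow> 0 \<le> p \<Longrightarrow> 0 \<le> pq_int m p q"
  unfolding pq_int_def by (intro sum_nonneg) auto

lemma pq_int_ge_mult_power:
  assumes "0 \<le> q" "q \<le> p"
  shows "real m * q ^ (m - 1) \<le> pq_int m p q"
proof -
  have "(\<Sum>j<m. q ^ (m - 1)) \<le> (\<Sum>j<m. p ^ (m - 1 - j) * q ^ j)"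
  proof (rule sum_mono)
    fix j assume "j \<in> {..<m}"
    then have "q ^ (m - 1) = q ^ (m - 1 - j) * q ^ j" by (simp add: power_add[symmetric])
    also have "\<dots> \<le> p ^ (m - 1 - j) * q ^ j" using assms by (intro mult_right_mono power_mono) auto
    finally show "q ^ (m - 1) \<le> p ^ (m - 1 - j) * q ^ j" .
  qed
  then show ?thesis by (simp add: pq_int_def)
qed

lemma pq_int_pos:
  assumes "0 < q" "q \<le> p" "m \<ge> 1"
  shows "0 < pq_int m p q"
proof -
  have "0 < real m * q ^ (m - 1)" using assms by simp
  then show ?thesis using pq_int_ge_mult_power[of q p m] assms by linarith
qed

lemma pq_fact_0 [simp]: "pq_fact 0 p q = 1"
  by (simp add: pq_fact_def)

lemma pq_fact_Suc: "pq_fact (Suc m) p q = pq_fact m p q * pq_int (Suc m) p q"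
  by (simp add: pq_fact_def prod.nat_ivl_Suc')

lemma pq_fact_pos: "0 < q \<Longrightarrow> q \<le> p \<Longrightarrow> 0 < pq_fact m p q"
  by (induction m) (auto simp: pq_fact_def pq_fact_Suc pq_int_pos)

lemma Suc_choose_two: "Suc k choose 2 = (k choose 2) + k"
  by (simp add: numeral_2_eq_2)

text \<open>\<open>pq_binom n k\<close> is junk for \<open>k > n\<close> (the subtraction \<open>n - k\<close> truncates); the
  Pascal recursion needs the value \<open>0\<close> there.\<close>
definition pq_choose :: "real \<Rightarrow> real \<Rightarrow> nat \<Rightarrow> nat \<Rightarrow> real" where
  "pq_choose p q n k = (if k \<le> n then pq_binom n k p q else 0)"

lemma pq_choose_0 [simp]: "0 < q \<Longrightarrow> q \<le> p \<Longrightarrow> pq_choose p q n 0 = 1"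
  using pq_fact_pos[of q p n] by (simp add: pq_choose_def pq_binom_def)

lemma pq_choose_nonneg: "0 < q \<Longrightarrow> q \<le> p \<Longrightarrow> 0 \<le> pq_choose p q n k"
  using pq_fact_pos[of q p n] pq_fact_pos[of q p k] pq_fact_pos[of q p "n - k"]
  by (simp add: pq_choose_def pq_binom_def)

lemma pq_choose_Suc_Suc:
  assumes "0 < q" "q < p"
  shows "pq_choose p q (Suc n) (Suc k) = q ^ (n - k) * pq_choose p q n k + p ^ Suc k * pq_choose p q n (Suc k)"
proof (cases "k < n")
  case False
  with assms show ?thesis
    using pq_fact_pos[of q p "Suc n"] pq_fact_pos[of q p n]
    by (cases "k = n") (simp_all add: pq_choose_def pq_binom_def)
next
  case True
  then obtain d where d: "n = k + Suc d" using less_iff_Suc_add by auto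
  have diffs: "Suc n - Suc k = Suc d" "n - k = Suc d" "n - Suc k = d" using d by auto
  note fact_pos = pq_fact_pos[OF assms(1) less_imp_le[OF assms(2)]]
  note int_pos = pq_int_pos[OF assms(1) less_imp_le[OF assms(2)]]
  have split: "pq_int (Suc n) p q = q ^ Suc d * pq_int (Suc k) p q + p ^ Suc k * pq_int (Suc d) p q"
    using pq_int_add[of p q "Suc d" "Suc k"] assms d by (simp add: add.commute)
  have "pq_choose p q (Suc n) (Suc k) = pq_fact n p q * pq_int (Suc n) p q /
      (pq_fact k p q * pq_int (Suc k) p q * (pq_fact d p q * pq_int (Suc d) p q))"
    using True by (simp add: pq_choose_def pq_binom_def diffs pq_fact_Suc)
  also have "\<dots> = q ^ (n - k) * (pq_fact n p q / (pq_fact k p q * (pq_fact d p q * pq_int (Suc d) p q)))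
      + p ^ Suc k * (pq_fact n p q / (pq_fact k p q * pq_int (Suc k) p q * pq_fact d p q))"
    unfolding split diffs using int_pos[of "Suc k"] int_pos[of "Suc d"] fact_pos[of k] fact_pos[of d]
    by (simp add: field_simps)
  also have "\<dots> = q ^ (n - k) * pq_choose p q n k + p ^ Suc k * pq_choose p q n (Suc k)"
    using True by (simp add: pq_choose_def pq_binom_def diffs pq_fact_Suc)
  finally show ?thesis .
qed

lemma pq_choose_absorb:
  assumes "0 < q" "q \<le> p"
  shows "pq_choose p q (Suc m) (Suc k) * pq_int (Suc k) p q = pq_int (Suc m) p q * pq_choose p q m k"
  using pq_fact_pos[OF assms, of m] pq_fact_pos[OF assms, of k] pq_fact_pos[OF assms, of "m - k"]
    pq_int_pos[OF assms, of "Suc k"]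
  by (simp add: pq_choose_def pq_binom_def pq_fact_Suc field_simps)

definition pq_one_minus_pow :: "real \<Rightarrow> real \<Rightarrow> nat \<Rightarrow> real \<Rightarrow> real" where
  "pq_one_minus_pow p q m x = (\<Prod>s<m. p ^ s - q ^ s * x)"

lemma pq_one_minus_pow_0 [simp]: "pq_one_minus_pow p q 0 x = 1"
  by (simp add: pq_one_minus_pow_def)

lemma pq_one_minus_pow_Suc: "pq_one_minus_pow p q (Suc m) x = pq_one_minus_pow p q m x * (p ^ m - q ^ m * x)"
  by (simp add: pq_one_minus_pow_def)

lemma pq_one_minus_pow_nonneg:
  assumes "0 \<le> q" "q \<le> p" "0 \<le> x" "x \<le> 1"
  shows "0 \<le> pq_one_minus_pow p q m x"
  unfolding pq_one_minus_pow_def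
proof (rule prod_nonneg)
  fix s
  have "q ^ s * x \<le> q ^ s" using assms by (simp add: mult_left_le)
  also have "\<dots> \<le> p ^ s" using assms by (simp add: power_mono)
  finally show "0 \<le> p ^ s - q ^ s * x" by simp
qed

definition pq_bernstein_basis :: "real \<Rightarrow> real \<Rightarrow> nat \<Rightarrow> nat \<Rightarrow> real \<Rightarrow> real" where
  "pq_bernstein_basis p q n k x =
     pq_choose p q n k * p ^ (k choose 2) * x ^ k * pq_one_minus_pow p q (n - k) x"

lemma pq_bernstein_basis_eq_0: "n < k \<Longrightarrow> pq_bernstein_basis p q n k x = 0"
  by (simp add: pq_bernstein_basis_def pq_choose_def)

lemma pq_bernstein_basis_nonneg:
  "0 < q \<Longrightarrow> q \<le> p \<Longrightarrow> 0 \<le> x \<Longrightarrow> x \<le> 1 \<Longrightarrow> 0 \<le> pq_bernstein_basis p q n k x"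
  unfolding pq_bernstein_basis_def
  using pq_choose_nonneg[of q p n k] pq_one_minus_pow_nonneg[of q p x "n - k"] by simp

lemma pq_bernstein_basis_Suc_Suc:
  assumes "0 < q" "q < p" "k \<le> n"
  shows "pq_bernstein_basis p q (Suc n) (Suc k) x =
      pq_bernstein_basis p q n k x * (q ^ (n - k) * p ^ k * x)
    + pq_bernstein_basis p q n (Suc k) x * (p ^ Suc k * (p ^ (n - Suc k) - q ^ (n - Suc k) * x))"
proof (cases "k = n")
  case True
  have "pq_choose p q n (Suc n) = 0" by (simp add: pq_choose_def)
  with True show ?thesis
    by (simp add: pq_bernstein_basis_def pq_choose_Suc_Suc[OF assms(1,2)] Suc_choose_two
        power_add algebra_simps)
next
  case False
  then have diffs: "n - k = Suc (n - Suc k)" "Suc n - Suc k = Suc (n - Suc k)" using assms(3) by auto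
  show ?thesis
    unfolding pq_bernstein_basis_def pq_choose_Suc_Suc[OF assms(1,2)] Suc_choose_two diffs
      pq_one_minus_pow_Suc
    by (simp add: power_add algebra_simps)
qed

lemma sum_pq_bernstein_basis:
  assumes "0 < q" "q < p"
  shows "(\<Sum>k\<le>n. pq_bernstein_basis p q n k x) = p ^ (n choose 2)"
proof (induction n)
  case 0
  then show ?case using assms by (simp add: pq_bernstein_basis_def)
next
  case (Suc n)
  define F where "F j = pq_bernstein_basis p q n j x * (q ^ (n - j) * p ^ j * x)" for j
  define G where "G j = pq_bernstein_basis p q n j x * (p ^ j * (p ^ (n - j) - q ^ (n - j) * x))" for j
  have "(\<Sum>k\<le>Suc n. pq_bernstein_basis p q (Suc n) k x)
      = pq_bernstein_basis p q (Suc n) 0 x + (\<Sum>k\<le>n. pq_bernstein_basis p q (Suc n) (Suc k) x)"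
    by (rule sum.atMost_Suc_shift)
  also have "pq_bernstein_basis p q (Suc n) 0 x = G 0"
    using assms by (simp add: pq_bernstein_basis_def G_def pq_one_minus_pow_Suc)
  also have "(\<Sum>k\<le>n. pq_bernstein_basis p q (Suc n) (Suc k) x) = (\<Sum>k\<le>n. F k + G (Suc k))"
    by (rule sum.cong) (auto simp: pq_bernstein_basis_Suc_Suc[OF assms] F_def G_def)
  also have "G 0 + (\<Sum>k\<le>n. F k + G (Suc k)) = (\<Sum>k\<le>n. F k) + (\<Sum>k\<le>Suc n. G k)"
    unfolding sum.distrib sum.atMost_Suc_shift[of G n] by (simp add: algebra_simps)
  also have "(\<Sum>k\<le>Suc n. G k) = (\<Sum>k\<le>n. G k)"
    by (simp add: G_def pq_bernstein_basis_eq_0)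
  also have "(\<Sum>k\<le>n. F k) + (\<Sum>k\<le>n. G k) = (\<Sum>k\<le>n. pq_bernstein_basis p q n k x * p ^ n)"
    unfolding sum.distrib[symmetric]
  proof (rule sum.cong)
    fix k assume "k \<in> {..n}"
    then have "p ^ k * p ^ (n - k) = p ^ n" by (simp add: power_add[symmetric])
    then show "F k + G k = pq_bernstein_basis p q n k x * p ^ n"
      unfolding F_def G_def by (simp add: algebra_simps)
  qed simp
  also have "\<dots> = p ^ (Suc n choose 2)"
    using Suc by (simp add: sum_distrib_right[symmetric] Suc_choose_two power_add)
  finally show ?case .
qed

text \<open>The \<open>(p,q)\<close>-analogue of \<open>k binom(n,k) = n binom(n-1,k-1)\<close>: weighting the basis
  with the node numerator \<open>p^(n-k) [k]\<close> lowers the degree by one.\<close>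
lemma sum_pq_bernstein_basis_shift:
  assumes "0 < q" "q < p"
  shows "(\<Sum>k\<le>Suc m. pq_bernstein_basis p q (Suc m) k x * (p ^ (Suc m - k) * pq_int k p q) * h k)
    = pq_int (Suc m) p q * x * p ^ m * (\<Sum>k\<le>m. pq_bernstein_basis p q m k x * h (Suc k))"
proof -
  have "(\<Sum>k\<le>Suc m. pq_bernstein_basis p q (Suc m) k x * (p ^ (Suc m - k) * pq_int k p q) * h k)
     = (\<Sum>k\<le>m. pq_bernstein_basis p q (Suc m) (Suc k) x * (p ^ (m - k) * pq_int (Suc k) p q) * h (Suc k))"
    by (subst sum.atMost_Suc_shift) simp
  also have "\<dots> = (\<Sum>k\<le>m. pq_int (Suc m) p q * x * p ^ m * (pq_bernstein_basis p q m k x * h (Suc k)))"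
  proof (rule sum.cong)
    fix k assume "k \<in> {..m}"
    then have pk: "p ^ k * p ^ (m - k) = p ^ m" by (simp add: power_add[symmetric])
    have "pq_bernstein_basis p q (Suc m) (Suc k) x * (p ^ (m - k) * pq_int (Suc k) p q) * h (Suc k)
      = (pq_choose p q (Suc m) (Suc k) * pq_int (Suc k) p q) * p ^ (k choose 2) * x ^ k
          * pq_one_minus_pow p q (m - k) x * x * (p ^ k * p ^ (m - k)) * h (Suc k)"
      unfolding pq_bernstein_basis_def Suc_choose_two by (simp add: power_add algebra_simps)
    also have "\<dots> = pq_int (Suc m) p q * x * p ^ m * (pq_bernstein_basis p q m k x * h (Suc k))"
      unfolding pq_choose_absorb[OF assms(1) less_imp_le[OF assms(2)]] pk pq_bernstein_basis_def
      by (simp add: algebra_simps)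
    finally show "pq_bernstein_basis p q (Suc m) (Suc k) x * (p ^ (m - k) * pq_int (Suc k) p q) * h (Suc k)
      = pq_int (Suc m) p q * x * p ^ m * (pq_bernstein_basis p q m k x * h (Suc k))" .
  qed simp
  finally show ?thesis by (simp add: sum_distrib_left)
qed

lemma sum_pq_bernstein_basis_first_moment:
  assumes "0 < q" "q < p"
  shows "(\<Sum>k\<le>n. pq_bernstein_basis p q n k x * (p ^ (n - k) * pq_int k p q))
    = pq_int n p q * x * p ^ (n choose 2)"
proof (cases n)
  case (Suc m)
  have "(\<Sum>k\<le>n. pq_bernstein_basis p q n k x * (p ^ (n - k) * pq_int k p q))
     = (\<Sum>k\<le>Suc m. pq_bernstein_basis p q (Suc m) k x * (p ^ (Suc m - k) * pq_int k p q) * 1)"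
    using Suc by simp
  also have "\<dots> = pq_int (Suc m) p q * x * p ^ m * p ^ (m choose 2)"
    unfolding sum_pq_bernstein_basis_shift[OF assms] using sum_pq_bernstein_basis[OF assms] by simp
  finally show ?thesis using Suc by (simp add: Suc_choose_two power_add)
qed simp

lemma sum_pq_bernstein_basis_factorial_moment:
  assumes "0 < q" "q < p"
  shows "(\<Sum>k\<le>n. pq_bernstein_basis p q n k x * (p ^ (n - k) * pq_int k p q) * (p ^ (n - k) * pq_int (k - 1) p q))
    = pq_int n p q * pq_int (n - 1) p q * x^2 * p ^ (n choose 2)"
proof (cases n)
  case (Suc m)
  have "(\<Sum>k\<le>n. pq_bernstein_basis p q n k x * (p ^ (n - k) * pq_int k p q) * (p ^ (n - k) * pq_int (k - 1) p q))
     = (\<Sum>k\<le>Suc m. pq_bernstein_basis p q (Suc m) k x * (p ^ (Suc m - k) * pq_int k p q)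
          * (\<lambda>k. p ^ (Suc m - k) * pq_int (k - 1) p q) k)"
    using Suc by simp
  also have "\<dots> = pq_int (Suc m) p q * x * p ^ m * (pq_int m p q * x * p ^ (m choose 2))"
    unfolding sum_pq_bernstein_basis_shift[OF assms] using sum_pq_bernstein_basis_first_moment[OF assms, of m x]
    by simp
  finally show ?thesis using Suc by (simp add: Suc_choose_two power_add power2_eq_square algebra_simps)
qed simp

lemma sum_pq_bernstein_basis_second_moment:
  assumes "0 < q" "q < p" "n \<ge> 1"
  shows "(\<Sum>k\<le>n. pq_bernstein_basis p q n k x * (p ^ (n - k) * pq_int k p q)^2)
    = (p ^ (n - 1) * pq_int n p q * x + pq_int n p q * (pq_int n p q - p ^ (n - 1)) * x^2) * p ^ (n choose 2)"
proof -
  define N where "N = pq_int n p q"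
  have pq: "p \<noteq> q" using assms by simp
  text \<open>\<open>[k]^2 = p^(k-1) [k] + q [k] [k-1]\<close>, the \<open>(p,q)\<close>-version of \<open>k^2 = k + k(k-1)\<close>.\<close>
  have square: "pq_bernstein_basis p q n k x * (p ^ (n - k) * pq_int k p q)^2
      = p ^ (n - 1) * (pq_bernstein_basis p q n k x * (p ^ (n - k) * pq_int k p q))
        + q * (pq_bernstein_basis p q n k x * (p ^ (n - k) * pq_int k p q) * (p ^ (n - k) * pq_int (k - 1) p q))"
    if "k \<le> n" for k
  proof (cases k)
    case (Suc j)
    have "p ^ (n - k) * p ^ j = p ^ (n - 1)" using Suc that by (simp add: power_add[symmetric])
    then show ?thesis
      using Suc by (simp add: pq_int_Suc[OF pq] power2_eq_square algebra_simps)
  qed simp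
  have "(\<Sum>k\<le>n. pq_bernstein_basis p q n k x * (p ^ (n - k) * pq_int k p q)^2)
      = p ^ (n - 1) * (\<Sum>k\<le>n. pq_bernstein_basis p q n k x * (p ^ (n - k) * pq_int k p q))
        + q * (\<Sum>k\<le>n. pq_bernstein_basis p q n k x * (p ^ (n - k) * pq_int k p q)
                * (p ^ (n - k) * pq_int (k - 1) p q))"
    unfolding sum_distrib_left sum.distrib[symmetric] by (rule sum.cong) (simp_all add: square)
  also have "\<dots> = p ^ (n - 1) * (N * x * p ^ (n choose 2))
      + q * pq_int (n - 1) p q * (N * x^2 * p ^ (n choose 2))"
    unfolding sum_pq_bernstein_basis_first_moment[OF assms(1,2)]
      sum_pq_bernstein_basis_factorial_moment[OF assms(1,2)] N_def by (simp add: algebra_simps)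
  also have "q * pq_int (n - 1) p q = N - p ^ (n - 1)"
    using pq_int_Suc[OF pq, of "n - 1"] assms(3) by (simp add: N_def)
  finally show ?thesis unfolding N_def by (simp add: algebra_simps)
qed


lemma pq_int_shift_le:
  assumes "0 < q" "q < p" "k \<le> n"
  shows "p ^ (n - k) * pq_int k p q \<le> pq_int n p q"
proof -
  have "pq_int n p q = pq_int (k + (n - k)) p q" using assms by simp
  also have "\<dots> = p ^ (n - k) * pq_int k p q + q ^ k * pq_int (n - k) p q"
    using assms by (intro pq_int_add) simp
  finally show ?thesis using pq_int_nonneg[of q p "n - k"] assms by simp
qed

definition pq_stancu_weight :: "real \<Rightarrow> real \<Rightarrow> nat \<Rightarrow> nat \<Rightarrow> real \<Rightarrow> real" where
  "pq_stancu_weight p q n k x = pq_bernstein_basis p q n k x / p ^ (n choose 2)"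

definition pq_stancu_node :: "real \<Rightarrow> real \<Rightarrow> nat \<Rightarrow> real \<Rightarrow> real \<Rightarrow> nat \<Rightarrow> real" where
  "pq_stancu_node \<alpha> \<beta> n p q k = (p ^ (n - k) * pq_int k p q + \<alpha>) / (pq_int n p q + \<beta>)"

lemma pq_bernstein_stancu_eq_sum:
  "pq_bernstein_stancu \<alpha> \<beta> n p q f x =
     (\<Sum>k\<le>n. pq_stancu_weight p q n k x * f (pq_stancu_node \<alpha> \<beta> n p q k))"
  unfolding pq_bernstein_stancu_def atLeast0AtMost atLeast0LessThan sum_distrib_left
  by (rule sum.cong) (simp_all add: pq_stancu_weight_def pq_stancu_node_def pq_bernstein_basis_def
      pq_choose_def pq_one_minus_pow_def choose_two)

lemma pq_stancu_weight_nonneg: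
  "0 < q \<Longrightarrow> q \<le> p \<Longrightarrow> 0 \<le> x \<Longrightarrow> x \<le> 1 \<Longrightarrow> 0 \<le> pq_stancu_weight p q n k x"
  unfolding pq_stancu_weight_def using pq_bernstein_basis_nonneg[of q p x n k] by simp

lemma sum_pq_stancu_weight: "0 < q \<Longrightarrow> q < p \<Longrightarrow> (\<Sum>k\<le>n. pq_stancu_weight p q n k x) = 1"
  unfolding pq_stancu_weight_def sum_divide_distrib[symmetric] by (simp add: sum_pq_bernstein_basis)

lemma pq_stancu_node_mem:
  assumes "0 < q" "q < p" "n \<ge> 1" "0 \<le> \<alpha>" "\<alpha> \<le> \<beta>" "k \<le> n"
  shows "pq_stancu_node \<alpha> \<beta> n p q k \<in> {0..1}"
proof -
  have "0 \<le> p ^ (n - k) * pq_int k p q" using pq_int_nonneg[of q p k] assms by simp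
  moreover have "0 < pq_int n p q" using pq_int_pos[of q p n] assms by simp
  ultimately show ?thesis
    using pq_int_shift_le[OF assms(1,2,6)] assms(4,5) by (auto simp: pq_stancu_node_def field_simps)
qed

lemma pq_stancu_second_moment:
  assumes "0 < q" "q < p" "n \<ge> 1" "0 \<le> \<beta>"
  shows "(\<Sum>k\<le>n. pq_stancu_weight p q n k x * (pq_stancu_node \<alpha> \<beta> n p q k - x)^2)
    = ((\<alpha> - x * \<beta>)^2 + pq_int n p q * p ^ (n - 1) * x * (1 - x)) / (pq_int n p q + \<beta>)^2"
proof -
  define N where "N = pq_int n p q"
  define P where "P = p ^ (n choose 2)"
  define B where "B k = pq_bernstein_basis p q n k x" for k
  define u where "u k = p ^ (n - k) * pq_int k p q" for k
  define c where "c = \<alpha> - x * (N + \<beta>)"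
  have "0 < P" unfolding P_def using assms by simp
  have "0 < N + \<beta>" using pq_int_pos[of q p n] assms by (simp add: N_def)
  have summand: "pq_stancu_weight p q n k x * (pq_stancu_node \<alpha> \<beta> n p q k - x)^2
      = (B k * (u k)^2 + 2 * c * (B k * u k) + c^2 * B k) / (P * (N + \<beta>)^2)" for k
  proof -
    have "pq_stancu_node \<alpha> \<beta> n p q k - x = (u k + c) / (N + \<beta>)"
      using \<open>0 < N + \<beta>\<close> by (simp add: pq_stancu_node_def N_def u_def c_def field_simps)
    then have "pq_stancu_weight p q n k x * (pq_stancu_node \<alpha> \<beta> n p q k - x)^2
        = B k / P * ((u k + c) / (N + \<beta>))^2"
      by (simp add: pq_stancu_weight_def B_def P_def)
    also have "\<dots> = B k * (u k + c)^2 / (P * (N + \<beta>)^2)"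
      by (simp only: power_divide times_divide_times_eq)
    finally show ?thesis by (simp add: power2_eq_square algebra_simps)
  qed
  have "(\<Sum>k\<le>n. pq_stancu_weight p q n k x * (pq_stancu_node \<alpha> \<beta> n p q k - x)^2)
      = ((\<Sum>k\<le>n. B k * (u k)^2) + 2 * c * (\<Sum>k\<le>n. B k * u k) + c^2 * (\<Sum>k\<le>n. B k))
        / (P * (N + \<beta>)^2)"
    unfolding summand sum_divide_distrib[symmetric] sum.distrib sum_distrib_left ..
  also have "\<dots> = ((p ^ (n - 1) * N * x + N * (N - p ^ (n - 1)) * x^2) * P + 2 * c * (N * x * P) + c^2 * P)
        / (P * (N + \<beta>)^2)"
    unfolding B_def u_def N_def P_def
    using sum_pq_bernstein_basis_second_moment[OF assms(1-3)] sum_pq_bernstein_basis_first_moment[OF assms(1,2)]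
      sum_pq_bernstein_basis[OF assms(1,2)] by simp
  also have "\<dots> = P * ((\<alpha> - x * \<beta>)^2 + N * p ^ (n - 1) * x * (1 - x)) / (P * (N + \<beta>)^2)"
    by (simp add: c_def power2_eq_square algebra_simps)
  also have "\<dots> = ((\<alpha> - x * \<beta>)^2 + N * p ^ (n - 1) * x * (1 - x)) / (N + \<beta>)^2"
    using \<open>0 < P\<close> by simp
  finally show ?thesis unfolding N_def .
qed

lemma pq_stancu_second_moment_le:
  assumes "0 < q" "q < p" "p \<le> 1" "n \<ge> 1" "0 \<le> \<alpha>" "\<alpha> \<le> \<beta>" "0 \<le> x" "x \<le> 1"
  shows "(\<Sum>k\<le>n. pq_stancu_weight p q n k x * (pq_stancu_node \<alpha> \<beta> n p q k - x)^2)
    \<le> \<beta>^2 / (pq_int n p q)^2 + 1 / pq_int n p q"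
proof -
  define N where "N = pq_int n p q"
  have "0 < N" using pq_int_pos[of q p n] assms by (simp add: N_def)
  have "(\<alpha> - x * \<beta>)^2 \<le> \<beta>^2"
  proof -
    have "0 \<le> x * \<beta>" "x * \<beta> \<le> \<beta>" using assms by (auto simp: mult_left_le_one_le)
    then have "\<bar>\<alpha> - x * \<beta>\<bar> \<le> \<bar>\<beta>\<bar>" using assms by linarith
    then show ?thesis by (simp add: abs_le_square_iff)
  qed
  moreover have "N * (p ^ (n - 1) * (x * (1 - x))) \<le> N"
    using \<open>0 < N\<close> assms by (intro mult_left_le mult_le_one) (auto simp: power_le_one mult_le_one)
  ultimately have "(\<alpha> - x * \<beta>)^2 + N * p ^ (n - 1) * x * (1 - x) \<le> \<beta>^2 + N"
    by (simp add: mult.assoc)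
  then have "((\<alpha> - x * \<beta>)^2 + N * p ^ (n - 1) * x * (1 - x)) / (N + \<beta>)^2 \<le> (\<beta>^2 + N) / (N + \<beta>)^2"
    by (simp add: divide_right_mono)
  also have "\<dots> \<le> (\<beta>^2 + N) / N^2"
    using \<open>0 < N\<close> assms by (intro divide_left_mono power_mono) auto
  also have "\<dots> = \<beta>^2 / N^2 + 1 / N"
    using \<open>0 < N\<close> by (simp add: field_simps power2_eq_square)
  finally show ?thesis
    unfolding pq_stancu_second_moment[OF assms(1,2,4) order_trans[OF assms(5,6)]] N_def .
qed


lemma pq_int_sequence_at_top:
  fixes p q :: "nat \<Rightarrow> real"
  assumes "eventually (\<lambda>n. 0 \<le> q n \<and> q n \<le> 1 \<and> q n \<le> p n) sequentially"
    and "(\<lambda>n. q n ^ n) \<longlonglongrightarrow> 1"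
  shows "filterlim (\<lambda>n. pq_int n (p n) (q n)) at_top sequentially"
proof (rule filterlim_at_top_mono)
  show "filterlim (\<lambda>n. q n ^ n * real n) at_top sequentially"
    by (rule filterlim_tendsto_pos_mult_at_top[OF assms(2)]) (simp_all add: filterlim_real_sequentially)
  from assms(1) show "eventually (\<lambda>n. q n ^ n * real n \<le> pq_int n (p n) (q n)) sequentially"
  proof eventually_elim
    case (elim n)
    then have "q n ^ n \<le> q n ^ (n - 1)" by (intro power_decreasing) auto
    then have "q n ^ n * real n \<le> real n * q n ^ (n - 1)" by (simp add: mult.commute mult_left_mono)
    also have "\<dots> \<le> pq_int n (p n) (q n)" using elim by (intro pq_int_ge_mult_power) auto
    finally show ?case .
  qed
qed

lemma tendsto_divide_square_add_inverse_0:
  fixes N :: "nat \<Rightarrow> real"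
  assumes "filterlim N at_top sequentially"
  shows "(\<lambda>n. c / (N n)^2 + 1 / N n) \<longlonglongrightarrow> 0"
proof -
  have "(\<lambda>n. c * (inverse (N n))^2 + inverse (N n)) \<longlonglongrightarrow> c * 0^2 + 0"
    using assms by (intro tendsto_intros tendsto_inverse_0_at_top)
  then show ?thesis by (simp add: divide_inverse power_inverse)
qed

lemma continuous_on_compact_quadratic_modulus:
  fixes f :: "'a::metric_space \<Rightarrow> real"
  assumes "compact S" "continuous_on S f" "0 < e"
  obtains K where "0 \<le> K" "\<And>s x. s \<in> S \<Longrightarrow> x \<in> S \<Longrightarrow> \<bar>f s - f x\<bar> \<le> e + K * (dist s x)^2"
proof -
  obtain M where M: "0 < M" "\<And>s. s \<in> S \<Longrightarrow> \<bar>f s\<bar> \<le> M"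
    using compact_imp_bounded[OF compact_continuous_image[OF assms(2,1)]] unfolding bounded_pos by auto
  obtain d where d: "0 < d" "\<And>s x. s \<in> S \<Longrightarrow> x \<in> S \<Longrightarrow> dist s x < d \<Longrightarrow> dist (f s) (f x) < e"
    using compact_uniformly_continuous[OF assms(2,1)] assms(3) unfolding uniformly_continuous_on_def by metis
  show ?thesis
  proof (rule that[of "2 * M / d^2"])
    show "0 \<le> 2 * M / d^2" using M by simp
    fix s x assume "s \<in> S" "x \<in> S"
    show "\<bar>f s - f x\<bar> \<le> e + 2 * M / d^2 * (dist s x)^2"
    proof (cases "dist s x < d")
      case True
      then have "\<bar>f s - f x\<bar> < e" using d(2)[OF \<open>s \<in> S\<close> \<open>x \<in> S\<close>] by (simp add: dist_real_def)
      moreover have "0 \<le> 2 * M / d^2 * (dist s x)^2" using M by simp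
      ultimately show ?thesis by linarith
    next
      case False
      then have "d^2 \<le> (dist s x)^2" using d(1) by (simp add: power_mono)
      have "\<bar>f s - f x\<bar> \<le> 2 * M" using M(2)[OF \<open>s \<in> S\<close>] M(2)[OF \<open>x \<in> S\<close>] by linarith
      also have "\<dots> = 2 * M / d^2 * d^2" using d(1) by simp
      also have "\<dots> \<le> 2 * M / d^2 * (dist s x)^2"
        using \<open>d^2 \<le> (dist s x)^2\<close> M(1) by (intro mult_left_mono) auto
      finally show ?thesis using assms(3) by linarith
    qed
  qed
qed

lemma convex_combination_error_le:
  fixes w y d :: "'i \<Rightarrow> real"
  assumes "\<And>i. i \<in> I \<Longrightarrow> 0 \<le> w i" "sum w I = 1"
    and "\<And>i. i \<in> I \<Longrightarrow> \<bar>y i - c\<bar> \<le> e + K * d i"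
  shows "\<bar>(\<Sum>i\<in>I. w i * y i) - c\<bar> \<le> e + K * (\<Sum>i\<in>I. w i * d i)"
proof -
  have "(\<Sum>i\<in>I. w i * y i) - c = (\<Sum>i\<in>I. w i * (y i - c))"
    using assms(2) by (simp add: right_diff_distrib sum_subtractf flip: sum_distrib_right)
  also have "\<bar>\<dots>\<bar> \<le> (\<Sum>i\<in>I. w i * \<bar>y i - c\<bar>)"
    using sum_abs[of "\<lambda>i. w i * (y i - c)" I] assms(1) by (simp add: abs_mult)
  also have "\<dots> \<le> (\<Sum>i\<in>I. w i * (e + K * d i))"
    using assms(1,3) by (intro sum_mono mult_left_mono) auto
  also have "\<dots> = (\<Sum>i\<in>I. w i) * e + K * (\<Sum>i\<in>I. w i * d i)"
    by (simp add: distrib_left sum.distrib sum_distrib_left sum_distrib_right mult.left_commute)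
  also have "\<dots> = e + K * (\<Sum>i\<in>I. w i * d i)"
    using assms(2) by simp
  finally show ?thesis .
qed

lemma tendsto_SUP_abs_zero:
  fixes g :: "nat \<Rightarrow> 'a \<Rightarrow> real"
  assumes "A \<noteq> {}" and "\<And>e. 0 < e \<Longrightarrow> eventually (\<lambda>n. \<forall>x\<in>A. \<bar>g n x\<bar> \<le> e) sequentially"
  shows "(\<lambda>n. SUP x\<in>A. \<bar>g n x\<bar>) \<longlonglongrightarrow> 0"
proof (rule tendstoI)
  fix r :: real assume "0 < r"
  obtain a where "a \<in> A" using assms(1) by blast
  have "eventually (\<lambda>n. \<forall>x\<in>A. \<bar>g n x\<bar> \<le> r / 2) sequentially"
    using \<open>0 < r\<close> by (intro assms(2)) simp
  then show "eventually (\<lambda>n. dist (SUP x\<in>A. \<bar>g n x\<bar>) 0 < r) sequentially"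
  proof eventually_elim
    case (elim n)
    then have "(SUP x\<in>A. \<bar>g n x\<bar>) \<le> r / 2" by (intro cSUP_least) (use assms(1) in auto)
    moreover have "\<bar>g n a\<bar> \<le> (SUP x\<in>A. \<bar>g n x\<bar>)"
      using elim \<open>a \<in> A\<close> by (intro cSUP_upper bdd_aboveI2[where M = "r / 2"]) auto
    ultimately show ?case using \<open>0 < r\<close> by auto
  qed
qed

lemma pq_bernstein_stancu_error_le:
  assumes "0 < q" "q < p" "p \<le> 1" "n \<ge> 1" "0 \<le> \<alpha>" "\<alpha> \<le> \<beta>" "x \<in> {0..1}" "0 \<le> K"
    and "\<And>s. s \<in> {0..1} \<Longrightarrow> \<bar>f s - f x\<bar> \<le> e + K * (s - x)^2"
  shows "\<bar>pq_bernstein_stancu \<alpha> \<beta> n p q f x - f x\<bar>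
     \<le> e + K * (\<beta>^2 / (pq_int n p q)^2 + 1 / pq_int n p q)"
proof -
  have "\<bar>pq_bernstein_stancu \<alpha> \<beta> n p q f x - f x\<bar>
      \<le> e + K * (\<Sum>k\<le>n. pq_stancu_weight p q n k x * (pq_stancu_node \<alpha> \<beta> n p q k - x)^2)"
    unfolding pq_bernstein_stancu_eq_sum
    using assms pq_stancu_weight_nonneg sum_pq_stancu_weight pq_stancu_node_mem
    by (intro convex_combination_error_le) auto
  also have "\<dots> \<le> e + K * (\<beta>^2 / (pq_int n p q)^2 + 1 / pq_int n p q)"
    using pq_stancu_second_moment_le[OF assms(1-6)] assms(7,8) by (intro add_left_mono mult_left_mono) auto
  finally show ?thesis .
qed

theorem theorem3p1p1:
  fixes \<alpha> \<beta> :: real and p q :: "nat \<Rightarrow> real" and f :: "real \<Rightarrow> real"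
  assumes "0 \<le> \<alpha>" and "\<alpha> \<le> \<beta>"
    and "\<And>n. n \<ge> 1 \<Longrightarrow> 0 < q n \<and> q n < 1"
    and "\<And>n. n \<ge> 1 \<Longrightarrow> q n < p n \<and> p n \<le> 1"
    and "p \<longlonglongrightarrow> 1" and "q \<longlonglongrightarrow> 1"
    and "(\<lambda>n. p n ^ n) \<longlonglongrightarrow> 1" and "(\<lambda>n. q n ^ n) \<longlonglongrightarrow> 1"
    and "continuous_on {0..1} f"
  shows "(\<lambda>n. SUP x\<in>{0..1}. \<bar>pq_bernstein_stancu \<alpha> \<beta> n (p n) (q n) f x - f x\<bar>)
           \<longlonglongrightarrow> 0"
proof (rule tendsto_SUP_abs_zero)
  define N where "N n = pq_int n (p n) (q n)" for n
  have "filterlim N at_top sequentially"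
    unfolding N_def
    by (rule pq_int_sequence_at_top[OF eventually_mono[OF eventually_ge_at_top[of 1]] assms(8)])
      (use assms(3,4) in force)
  then have moment_to_0: "(\<lambda>n. \<beta>^2 / (N n)^2 + 1 / N n) \<longlonglongrightarrow> 0"
    by (rule tendsto_divide_square_add_inverse_0)
  fix e :: real assume "0 < e"
  then obtain K where "0 \<le> K"
    and K: "\<And>s x. s \<in> {0..1} \<Longrightarrow> x \<in> {0..1} \<Longrightarrow> \<bar>f s - f x\<bar> \<le> e / 2 + K * (s - x)^2"
    using continuous_on_compact_quadratic_modulus[OF compact_Icc assms(9), of "e / 2"]
    by (auto simp: dist_real_def)
  have "eventually (\<lambda>n. K * (\<beta>^2 / (N n)^2 + 1 / N n) < e / 2) sequentially"
    using tendsto_mult_right_zero[OF moment_to_0, of K] \<open>0 < e\<close> by (intro order_tendstoD(2)) auto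
  then show "eventually (\<lambda>n. \<forall>x\<in>{0..1}.
      \<bar>pq_bernstein_stancu \<alpha> \<beta> n (p n) (q n) f x - f x\<bar> \<le> e) sequentially"
    using eventually_ge_at_top[of 1]
  proof eventually_elim
    case (elim n)
    show ?case
    proof
      fix x :: real assume "x \<in> {0..1}"
      have "\<bar>pq_bernstein_stancu \<alpha> \<beta> n (p n) (q n) f x - f x\<bar>
          \<le> e / 2 + K * (\<beta>^2 / (N n)^2 + 1 / N n)"
        unfolding N_def using assms(1-4) elim(2) \<open>x \<in> {0..1}\<close> \<open>0 \<le> K\<close> K
        by (intro pq_bernstein_stancu_error_le) auto
      then show "\<bar>pq_bernstein_stancu \<alpha> \<beta> n (p n) (q n) f x - f x\<bar> \<le> e" using elim(1) by linarith
    qed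
  qed
qed simp

end
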